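(* Let $T=(V,E)$ be a finite rooted tree, $\Pr$ a probability distribution over a finite set of queries, $k$ a positive integer, and let $R^*$ be an optimal solution to the problem of maximizing the benefit $B(R)$ over all $R\subseteq V$ with $|R|\le k$. Let $u\in V$ and let $v\in A(u)\cup\{\epsilon\}$ be the lowest ancestor of $u$ that belongs to $R^*$ (with $v=\epsilon$ if no proper ancestor of $u$ belongs to $R^*$). Let $R^*_u=T(u)\cap R^*$ and $\kappa^*_u=|T(u)\cap R^*|$. Then $R^*_u$ maximizes $B_u(R_u\cup\{v\})$ over all $R_u\subseteq T(u)$ with $|R_u|=\kappa^*_u$, i.e. $$R^*_u\in\arg\max_{R_u\subseteq T(u),\ |R_u|=\kappa^*_u} B_u(R_u\cup\{v\}).$$
   Context: $T=(V,E)$ is a finite rooted tree. $T(u)$ is the set of nodes of the subtree rooted at $u$ (including $u$); $A(u)$ is the set of proper ancestors of $u$. Each non-leaf node is associated with a variable of a finite set $X$; $\mathrm{vars}(u)$ is the set of variables associated with nodes of $T(u)$. Each query $q$ determines $Z_q\subseteq X$. For $R\subseteq V$, $w\in V$: $I_q(w,R)=1$ iff $w\in R$, $\mathrm{vars}(w)\subseteq Z_q$, and no $x\in A(w)\cap R$ has $\mathrm{vars}(x)\subseteq Z_q$; else $0$; $\mathbb{E}[I(w,R)]=\sum_q\Pr(q)I_q(w,R)$. Nodes have partial costs $c(x)$; total cost $C(w)=\sum_{x\in T(w)}c(x)$. Benefit: $B(R)=\sum_{w\in R}\mathbb{E}[I(w,R)]C(w)$. Partial benefit: $B_u(R)=\sum_{w\in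 R\cap T(u)}\mathbb{E}[I(w,R)]C(w)$. $\epsilon$ is an auxiliary symbol not in $V$ meaning "no ancestor"; by convention $B_u(R_u\cup\{\epsilon\}):=B_u(R_u)$. *)

theory Defs
  imports Complex_Main
begin

text \<open>A finite rooted tree is given by a finite node set V, a root r and a parent
  function par (meaningful on V - {r}).  Edges point from a child to its parent.\<close>

definition tree_edges :: "'a set \<Rightarrow> 'a \<Rightarrow> ('a \<Rightarrow> 'a) \<Rightarrow> ('a \<times> 'a) set" where
  "tree_edges V r par = {(w, par w) | w. w \<in> V \<and> w \<noteq> r}"

definition rooted_tree :: "'a set \<Rightarrow> 'a \<Rightarrow> ('a \<Rightarrow> 'a) \<Rightarrow> bool" where
  "rooted_tree V r par \<longleftrightarrow> finite V \<and> r \<in> V \<and> (\<forall>w \<in> V - {r}. par w \<in> V)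
     \<and> (\<forall>w \<in> V. (w, r) \<in> (tree_edges V r par)\<^sup>*)"

definition anc :: "'a set \<Rightarrow> 'a \<Rightarrow> ('a \<Rightarrow> 'a) \<Rightarrow> 'a \<Rightarrow> 'a set" where
  "anc V r par u = {x. (u, x) \<in> (tree_edges V r par)\<^sup>+}"

definition subtree :: "'a set \<Rightarrow> 'a \<Rightarrow> ('a \<Rightarrow> 'a) \<Rightarrow> 'a \<Rightarrow> 'a set" where
  "subtree V r par u = {w \<in> V. w = u \<or> u \<in> anc V r par w}"

definition is_leaf :: "'a set \<Rightarrow> 'a \<Rightarrow> ('a \<Rightarrow> 'a) \<Rightarrow> 'a \<Rightarrow> bool" where
  "is_leaf V r par w \<longleftrightarrow> \<not> (\<exists>w' \<in> V. w' \<noteq> r \<and> par w' = w)"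

definition vars :: "'a set \<Rightarrow> 'a \<Rightarrow> ('a \<Rightarrow> 'a) \<Rightarrow> ('a \<Rightarrow> 'x) \<Rightarrow> 'a \<Rightarrow> 'x set" where
  "vars V r par var u = var ` {w \<in> subtree V r par u. \<not> is_leaf V r par w}"

definition Iq :: "'a set \<Rightarrow> 'a \<Rightarrow> ('a \<Rightarrow> 'a) \<Rightarrow> ('a \<Rightarrow> 'x) \<Rightarrow> 'x set \<Rightarrow> 'a \<Rightarrow> 'a set \<Rightarrow> real" where
  "Iq V r par var Zq w R =
     (if w \<in> R \<and> vars V r par var w \<subseteq> Zq
         \<and> \<not> (\<exists>x \<in> anc V r par w \<inter> R. vars V r par var x \<subseteq> Zq) then 1 else 0)"

definition EI :: "'a set \<Rightarrow> 'a \<Rightarrow> ('a \<Rightarrow> 'a) \<Rightarrow> ('a \<Rightarrow> 'x) \<Rightarrow> 'q set \<Rightarrow> ('q \<Rightarrow> real)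
    \<Rightarrow> ('q \<Rightarrow> 'x set) \<Rightarrow> 'a \<Rightarrow> 'a set \<Rightarrow> real" where
  "EI V r par var Q Pr Z w R = (\<Sum>q\<in>Q. Pr q * Iq V r par var (Z q) w R)"

definition Ctot :: "'a set \<Rightarrow> 'a \<Rightarrow> ('a \<Rightarrow> 'a) \<Rightarrow> ('a \<Rightarrow> real) \<Rightarrow> 'a \<Rightarrow> real" where
  "Ctot V r par c w = (\<Sum>x\<in>subtree V r par w. c x)"

definition benefit :: "'a set \<Rightarrow> 'a \<Rightarrow> ('a \<Rightarrow> 'a) \<Rightarrow> ('a \<Rightarrow> 'x) \<Rightarrow> 'q set \<Rightarrow> ('q \<Rightarrow> real)
    \<Rightarrow> ('q \<Rightarrow> 'x set) \<Rightarrow> ('a \<Rightarrow> real) \<Rightarrow> 'a set \<Rightarrow> real" where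
  "benefit V r par var Q Pr Z c R = (\<Sum>w\<in>R. EI V r par var Q Pr Z w R * Ctot V r par c w)"

definition partial_benefit :: "'a set \<Rightarrow> 'a \<Rightarrow> ('a \<Rightarrow> 'a) \<Rightarrow> ('a \<Rightarrow> 'x) \<Rightarrow> 'q set \<Rightarrow> ('q \<Rightarrow> real)
    \<Rightarrow> ('q \<Rightarrow> 'x set) \<Rightarrow> ('a \<Rightarrow> real) \<Rightarrow> 'a \<Rightarrow> 'a set \<Rightarrow> real" where
  "partial_benefit V r par var Q Pr Z c u R =
     (\<Sum>w\<in>R \<inter> subtree V r par u. EI V r par var Q Pr Z w R * Ctot V r par c w)"

end

theory Submission
  imports Defs
begin

text \<open>Exchange argument.  Fix the part of R* outside T(u) and replace R*_u by any R_u of the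
  same size; the resulting set is still feasible, so its benefit is at most B(R*).  Nodes
  outside T(u) have no ancestors inside T(u), so their contributions do not change.  For a node
  of T(u), the selected ancestors outside T(u) are v and ancestors of v, whose variable sets
  contain vars(v); so v alone blocks exactly the same queries, and the contribution of T(u)
  is B_u(R_u \<union> {v}).  Hence B_u(R_u \<union> {v}) \<le> B_u(R*_u \<union> {v}).  No property of the
  probabilities, the costs or k is needed.\<close>

lemma trancl_deterministic_comparable:
  assumes det: "\<And>x y y'. (x, y) \<in> E \<Longrightarrow> (x, y') \<in> E \<Longrightarrow> y = y'"
  shows "(w, a) \<in> E\<^sup>+ \<Longrightarrow> (w, b) \<in> E\<^sup>+ \<Longrightarrow> a = b \<or> (a, b) \<in> E\<^sup>+ \<or> (b, a) \<in> E\<^sup>+"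
proof (induction rule: trancl_induct)
  case (base a)
  then obtain z where "(w, z) \<in> E" "(z, b) \<in> E\<^sup>*" using tranclD by metis
  with base det have "z = a" by blast
  then show ?case using \<open>(z, b) \<in> E\<^sup>*\<close> by (auto simp: rtrancl_eq_or_trancl)
next
  case (step a a')
  from step.IH step.prems consider "a = b" | "(a, b) \<in> E\<^sup>+" | "(b, a) \<in> E\<^sup>+" by blast
  then show ?case
  proof cases
    case 1
    then show ?thesis using step by auto
  next
    case 2
    then obtain z where "(a, z) \<in> E" "(z, b) \<in> E\<^sup>*" using tranclD by metis
    with step det have "z = a'" by blast
    then show ?thesis using \<open>(z, b) \<in> E\<^sup>*\<close> by (auto simp: rtrancl_eq_or_trancl)
  next
    case 3
    then show ?thesis using step by (meson trancl.trancl_into_trancl)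
  qed
qed

lemma trancl_deterministic_irrefl:
  assumes det: "\<And>x y y'. (x, y) \<in> E \<Longrightarrow> (x, y') \<in> E \<Longrightarrow> y = y'"
    and sink: "\<And>y. (r, y) \<notin> E"
  shows "(x, r) \<in> E\<^sup>* \<Longrightarrow> (x, x) \<notin> E\<^sup>+"
proof (induction rule: converse_rtrancl_induct)
  case base
  then show ?case using sink by (metis tranclD)
next
  case (step x y)
  show ?case
  proof
    assume "(x, x) \<in> E\<^sup>+"
    then obtain z where "(x, z) \<in> E" "(z, x) \<in> E\<^sup>*" using tranclD by metis
    with step det have "z = y" by blast
    with \<open>(z, x) \<in> E\<^sup>*\<close> step(1) have "(y, y) \<in> E\<^sup>+" by (meson rtrancl_into_trancl1)
    with step.IH show False by simp
  qed
qed

lemma tree_edges_deterministic: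
  "(x, y) \<in> tree_edges V r par \<Longrightarrow> (x, y') \<in> tree_edges V r par \<Longrightarrow> y = y'"
  by (auto simp: tree_edges_def)

lemma anc_imp_in_V: "y \<in> anc V r par x \<Longrightarrow> x \<in> V"
  unfolding anc_def tree_edges_def by (auto dest: tranclD)

lemma anc_trans: "y \<in> anc V r par x \<Longrightarrow> z \<in> anc V r par y \<Longrightarrow> z \<in> anc V r par x"
  by (auto simp: anc_def)

lemma anc_comparable:
  assumes "a \<in> anc V r par w" "b \<in> anc V r par w"
  shows "a = b \<or> b \<in> anc V r par a \<or> a \<in> anc V r par b"
  using trancl_deterministic_comparable[OF tree_edges_deterministic] assms
  by (simp add: anc_def)

lemma anc_irrefl:
  assumes "rooted_tree V r par"
  shows "x \<notin> anc V r par x"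
proof
  assume x: "x \<in> anc V r par x"
  then have "x \<in> V" by (rule anc_imp_in_V)
  then have "(x, r) \<in> (tree_edges V r par)\<^sup>*" using assms by (simp add: rooted_tree_def)
  then have "(x, x) \<notin> (tree_edges V r par)\<^sup>+"
    by (intro trancl_deterministic_irrefl[of "tree_edges V r par" r x]) (auto simp: tree_edges_def)
  with x show False by (simp add: anc_def)
qed

lemma vars_anc_mono: "y \<in> anc V r par x \<Longrightarrow> vars V r par var x \<subseteq> vars V r par var y"
  unfolding vars_def subtree_def by (auto intro: anc_trans)

lemma anc_notin_subtree:
  "w \<in> V - subtree V r par u \<Longrightarrow> x \<in> anc V r par w \<Longrightarrow> x \<notin> subtree V r par u"
  unfolding subtree_def by (auto intro: anc_trans)

lemma anc_outside_subtree_imp_anc: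
  assumes "w \<in> subtree V r par u" "x \<in> anc V r par w" "x \<notin> subtree V r par u" "u \<in> V"
  shows "x \<in> anc V r par u"
proof (cases "w = u")
  case True
  then show ?thesis using assms(2) by simp
next
  case False
  then have "u \<in> anc V r par w" using assms(1) by (simp add: subtree_def)
  then have "u = x \<or> x \<in> anc V r par u \<or> u \<in> anc V r par x"
    using assms(2) by (rule anc_comparable)
  moreover have "u \<noteq> x" using assms(3,4) by (auto simp: subtree_def)
  moreover have "u \<notin> anc V r par x"
    using assms(3) anc_imp_in_V[of u V r par x] by (auto simp: subtree_def)
  ultimately show ?thesis by blast
qed

lemma Iq_eq_if_blockers_dominate:
  assumes "w \<in> R \<longleftrightarrow> w \<in> R'"
    and "\<And>x. x \<in> anc V r par w \<inter> R \<Longrightarrow>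
           \<exists>y \<in> anc V r par w \<inter> R'. vars V r par var y \<subseteq> vars V r par var x"
    and "\<And>x. x \<in> anc V r par w \<inter> R' \<Longrightarrow>
           \<exists>y \<in> anc V r par w \<inter> R. vars V r par var y \<subseteq> vars V r par var x"
  shows "Iq V r par var Zq w R = Iq V r par var Zq w R'"
proof -
  have "(\<exists>x \<in> anc V r par w \<inter> R. vars V r par var x \<subseteq> Zq) \<longleftrightarrow>
        (\<exists>x \<in> anc V r par w \<inter> R'. vars V r par var x \<subseteq> Zq)"
    using assms(2,3) by (meson subset_trans)
  then show ?thesis unfolding Iq_def using assms(1) by simp
qed

text \<open>The hypotheses on v are the part of "v is the lowest ancestor of u in R0" that is
  needed: every ancestor of u in R0 is v or an ancestor of v.\<close>

lemma Iq_subtree_node_eq: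
  assumes tree: "rooted_tree V r par" and u: "u \<in> V"
    and w: "w \<in> subtree V r par u"
    and S: "S - subtree V r par u = R0 - subtree V r par u"
    and v_anc: "set_option v \<subseteq> anc V r par u \<inter> R0"
    and v_lowest: "\<forall>x \<in> anc V r par u \<inter> R0. \<exists>y \<in> set_option v. x = y \<or> x \<in> anc V r par y"
  shows "Iq V r par var Zq w S = Iq V r par var Zq w ((S \<inter> subtree V r par u) \<union> set_option v)"
proof (rule Iq_eq_if_blockers_dominate)
  let ?T = "subtree V r par u"
  have v_above: "y \<in> anc V r par w" "y \<notin> ?T" if "y \<in> set_option v" for y
  proof -
    have y: "y \<in> anc V r par u" using that v_anc by blast
    then show "y \<in> anc V r par w" using w by (auto simp: subtree_def intro: anc_trans)
    show "y \<notin> ?T"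
      using y anc_irrefl[OF tree] anc_trans by (fastforce simp: subtree_def)
  qed
  show "w \<in> S \<longleftrightarrow> w \<in> (S \<inter> ?T) \<union> set_option v" using w v_above by blast
  show "\<exists>y \<in> anc V r par w \<inter> ((S \<inter> ?T) \<union> set_option v). vars V r par var y \<subseteq> vars V r par var x"
    if x: "x \<in> anc V r par w \<inter> S" for x
  proof (cases "x \<in> ?T")
    case False
    then have "x \<in> anc V r par u \<inter> R0"
      using x S anc_outside_subtree_imp_anc[OF w _ _ u] by blast
    then obtain y where "y \<in> set_option v" "x = y \<or> x \<in> anc V r par y" using v_lowest by blast
    then show ?thesis using v_above vars_anc_mono[of x V r par y var] by blast
  qed (use x in blast)
  show "\<exists>y \<in> anc V r par w \<inter> S. vars V r par var y \<subseteq> vars V r par var x"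
    if x: "x \<in> anc V r par w \<inter> ((S \<inter> ?T) \<union> set_option v)" for x
    using x S v_anc v_above by blast
qed

lemma Iq_outside_node_eq:
  assumes "w \<in> V - subtree V r par u"
    and "S - subtree V r par u = R0 - subtree V r par u"
  shows "Iq V r par var Zq w S = Iq V r par var Zq w R0"
proof -
  have "anc V r par w \<inter> S = anc V r par w \<inter> R0" "w \<in> S \<longleftrightarrow> w \<in> R0"
    using assms anc_notin_subtree[OF assms(1)] by blast+
  then show ?thesis by (simp add: Iq_def)
qed

lemma benefit_split_at_subtree:
  assumes tree: "rooted_tree V r par" and u: "u \<in> V"
    and R0: "R0 \<subseteq> V" and S: "S \<subseteq> V"
    and S_out: "S - subtree V r par u = R0 - subtree V r par u"
    and v_anc: "set_option v \<subseteq> anc V r par u \<inter> R0"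
    and v_lowest: "\<forall>x \<in> anc V r par u \<inter> R0. \<exists>y \<in> set_option v. x = y \<or> x \<in> anc V r par y"
  shows "benefit V r par var Q Pr Z c S =
           partial_benefit V r par var Q Pr Z c u ((S \<inter> subtree V r par u) \<union> set_option v)
         + (\<Sum>w \<in> R0 - subtree V r par u. EI V r par var Q Pr Z w R0 * Ctot V r par c w)"
proof -
  let ?T = "subtree V r par u"
  let ?X = "(S \<inter> ?T) \<union> set_option v"
  let ?term = "\<lambda>R w. EI V r par var Q Pr Z w R * Ctot V r par c w"
  have "finite S" using S tree finite_subset by (auto simp: rooted_tree_def)
  then have "benefit V r par var Q Pr Z c S = sum (?term S) (S \<inter> ?T) + sum (?term S) (S - ?T)"
    unfolding benefit_def by (rule sum.Int_Diff)
  moreover have "?X \<inter> ?T = S \<inter> ?T"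
    using v_anc anc_irrefl[OF tree] anc_trans by (fastforce simp: subtree_def)
  then have "sum (?term S) (S \<inter> ?T) = partial_benefit V r par var Q Pr Z c u ?X"
    unfolding partial_benefit_def EI_def
    by (intro sum.cong) (simp_all add: Iq_subtree_node_eq[OF tree u _ S_out v_anc v_lowest])
  moreover have "sum (?term S) (S - ?T) = sum (?term R0) (R0 - ?T)"
    unfolding EI_def using S_out R0
    by (intro sum.cong) (auto simp: Iq_outside_node_eq[OF _ S_out])
  ultimately show ?thesis by simp
qed

lemma card_replace_part:
  assumes "finite R" "finite A" "A \<subseteq> T" "card A = card (R \<inter> T)"
  shows "card ((R - T) \<union> A) = card R"
proof -
  have "card ((R - T) \<union> A) = card (R - T) + card (R \<inter> T)"
    using assms by (subst card_Un_disjoint) auto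
  also have "\<dots> = card R" using assms(1) by (metis add.commute card_Int_Diff)
  finally show ?thesis .
qed

theorem lemma3:
  fixes V :: "'a set" and r :: 'a and par :: "'a \<Rightarrow> 'a" and var :: "'a \<Rightarrow> 'x"
    and Q :: "'q set" and Pr :: "'q \<Rightarrow> real" and Z :: "'q \<Rightarrow> 'x set"
    and c :: "'a \<Rightarrow> real" and k :: nat and Ropt :: "'a set" and u :: 'a
    and v :: "'a option"
  assumes tree: "rooted_tree V r par"
    and Q_fin: "finite Q"
    and Pr_nonneg: "\<forall>q \<in> Q. Pr q \<ge> 0"
    and Pr_sum: "(\<Sum>q\<in>Q. Pr q) = 1"
    and k_pos: "0 < k"
    and Ropt_sub: "Ropt \<subseteq> V"
    and Ropt_card: "card Ropt \<le> k"
    and Ropt_opt: "\<forall>R. R \<subseteq> V \<and> card R \<le> k \<longrightarrow>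
                       benefit V r par var Q Pr Z c R \<le> benefit V r par var Q Pr Z c Ropt"
    and u_in: "u \<in> V"
    and v_none: "v = None \<longleftrightarrow> anc V r par u \<inter> Ropt = {}"
    and v_some: "\<forall>x. v = Some x \<longleftrightarrow>
                   (x \<in> anc V r par u \<inter> Ropt \<and>
                    (\<forall>y \<in> anc V r par u \<inter> Ropt. y = x \<or> y \<in> anc V r par x))"
  shows "(\<forall>Ru. Ru \<subseteq> subtree V r par u \<and> card Ru = card (Ropt \<inter> subtree V r par u) \<longrightarrow>
          partial_benefit V r par var Q Pr Z c u (Ru \<union> set_option v)
          \<le> partial_benefit V r par var Q Pr Z c u ((Ropt \<inter> subtree V r par u) \<union> set_option v))"
proof (intro allI impI)
  fix Ru
  assume Ru: "Ru \<subseteq> subtree V r par u \<and> card Ru = card (Ropt \<inter> subtree V r par u)"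
  let ?T = "subtree V r par u"
  let ?out = "\<Sum>w \<in> Ropt - ?T. EI V r par var Q Pr Z w Ropt * Ctot V r par c w"
  define R' where "R' = (Ropt - ?T) \<union> Ru"
  have v_anc: "set_option v \<subseteq> anc V r par u \<inter> Ropt" using v_some by (cases v) auto
  have v_lowest: "\<forall>x \<in> anc V r par u \<inter> Ropt. \<exists>y \<in> set_option v. x = y \<or> x \<in> anc V r par y"
    using v_none v_some by (cases v) auto
  have finV: "finite V" using tree by (simp add: rooted_tree_def)
  have R'_sub: "R' \<subseteq> V" using Ru Ropt_sub by (auto simp: R'_def subtree_def)
  have "card R' = card Ropt"
    unfolding R'_def using Ru Ropt_sub finV
    by (intro card_replace_part) (auto intro: finite_subset simp: subtree_def)
  then have "benefit V r par var Q Pr Z c R' \<le> benefit V r par var Q Pr Z c Ropt"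
    using Ropt_opt R'_sub Ropt_card by simp
  moreover have "R' - ?T = Ropt - ?T" "R' \<inter> ?T = Ru" using Ru by (auto simp: R'_def)
  then have "benefit V r par var Q Pr Z c R' =
      partial_benefit V r par var Q Pr Z c u (Ru \<union> set_option v) + ?out"
    using benefit_split_at_subtree[OF tree u_in Ropt_sub R'_sub _ v_anc v_lowest] by simp
  moreover have "benefit V r par var Q Pr Z c Ropt =
      partial_benefit V r par var Q Pr Z c u ((Ropt \<inter> ?T) \<union> set_option v) + ?out"
    using benefit_split_at_subtree[OF tree u_in Ropt_sub Ropt_sub _ v_anc v_lowest] by simp
  ultimately show "partial_benefit V r par var Q Pr Z c u (Ru \<union> set_option v)
      \<le> partial_benefit V r par var Q Pr Z c u ((Ropt \<inter> ?T) \<union> set_option v)"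
    by simp
qed

end
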